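(* Let $X=\{X^1,\dots,X^m\}\subseteq S_n$ and let $M_X$ be the $m\times n$ real matrix whose $i$-th row is $X^i$. If the columns of $M_X$ are linearly dependent over $\mathbb{R}$, then $\mathrm{Elim}(X)\neq S_n$. In particular, if $\mathrm{Elim}(X)=S_n$ and $|X|=n$, then $X^1,\dots,X^n$ are linearly independent.
   Context: $S_n$ is the set of all nonzero $n$-tuples in $\{-1,0,1\}^n$ whose first nonzero entry equals $1$. A tuple $t=(t_1,\dots,t_n)\in\{1,0,-1,u\}^n$ ($u$ a formal symbol) eliminates $s\in S_n$ if: (i) $t_i\neq0$ and $s_i\neq0$ for some $i$; (ii) there is $k\in\{+1,-1\}$ with $t_i=ks_i$ for all $i$ with $s_i\neq0$ and $t_i\neq0$; (iii) $s_i=0$ whenever $t_i=u$. For $X\subseteq S_n$, $\mathrm{Elim}(X)$ is the set of elements of $S_n$ eliminated by at least one element of $X$. *)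

theory Defs
  imports Complex_Main
begin

definition S :: "nat \<Rightarrow> int list set" where
  "S n = {s. length s = n \<and> set s \<subseteq> {-1, 0, 1} \<and>
             (\<exists>i<n. s ! i \<noteq> 0 \<and> s ! i = 1 \<and> (\<forall>j<i. s ! j = 0))}"

(* entries of an eliminating tuple: an integer value or the formal symbol u *)
datatype tentry = V int | U

definition eliminates :: "tentry list \<Rightarrow> int list \<Rightarrow> bool" where
  "eliminates t s \<longleftrightarrow> length t = length s \<and>
     (\<exists>i<length s. t ! i \<noteq> V 0 \<and> s ! i \<noteq> 0) \<and>
     (\<exists>k\<in>{1, -1::int}. \<forall>i<length s. s ! i \<noteq> 0 \<and> t ! i \<noteq> V 0 \<longrightarrow> t ! i = V (k * s ! i)) \<and>
     (\<forall>i<length s. t ! i = U \<longrightarrow> s ! i = 0)"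

definition Elim :: "nat \<Rightarrow> int list set \<Rightarrow> int list set" where
  "Elim n X = {s \<in> S n. \<exists>x\<in>X. eliminates (map V x) s}"

end

theory Submission
  imports Defs "Jordan_Normal_Form.Determinant"
begin

text \<open>Let \<open>c \<noteq> 0\<close> be a dependency among the columns, so \<open>\<Sum>\<^sub>j c\<^sub>j x\<^sub>j = 0\<close> for every
  \<open>x \<in> X\<close>. The sign vector of \<open>c\<close>, normalised by a global sign to lie in \<open>S\<^sub>n\<close>, is not
  eliminated: an eliminating \<open>x\<close> agrees with \<open>k \<cdot> sgn c\<close> on the common support, so every
  nonzero term of \<open>\<Sum>\<^sub>j c\<^sub>j x\<^sub>j\<close> equals \<open>k \<bar>c\<^sub>j\<bar>\<close> and at least one is nonzero.
  For \<open>|X| = n\<close> the matrix \<open>M\<^sub>X\<close> is square, so dependent rows give dependent columns.\<close>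

lemma sum_ne_zero_if_eliminates_sgn:
  fixes c :: "nat \<Rightarrow> real"
  assumes elim: "eliminates (map V x) s" and len: "length s = n"
    and sgn_s: "\<forall>j<n. real_of_int (s ! j) = sgn (c j)"
  shows "(\<Sum>j<n. c j * real_of_int (x ! j)) \<noteq> 0"
proof -
  have lx: "length x = n" using elim len by (simp add: eliminates_def)
  obtain i where i: "i < n" "x ! i \<noteq> 0" "s ! i \<noteq> 0"
    using elim len lx by (auto simp: eliminates_def)
  obtain k :: int where k: "k = 1 \<or> k = -1"
    and agree: "\<And>j. j < n \<Longrightarrow> s ! j \<noteq> 0 \<Longrightarrow> x ! j \<noteq> 0 \<Longrightarrow> x ! j = k * s ! j"
  proof -
    from elim have "\<exists>k\<in>{1, -1::int}. \<forall>j<n. s ! j \<noteq> 0 \<and> x ! j \<noteq> 0 \<longrightarrow> x ! j = k * s ! j"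
      using len lx by (auto simp: eliminates_def)
    with that show ?thesis by blast
  qed
  have summand: "c j * real_of_int (x ! j) = real_of_int k * (if x ! j \<noteq> 0 then \<bar>c j\<bar> else 0)"
    if "j < n" for j
  proof (cases "x ! j = 0 \<or> c j = 0")
    case False
    then have "s ! j \<noteq> 0" using sgn_s \<open>j < n\<close> by (metis of_int_0 sgn_eq_0_iff)
    then have "real_of_int (x ! j) = real_of_int k * sgn (c j)"
      using agree[OF \<open>j < n\<close>] False sgn_s \<open>j < n\<close> by simp
    with False show ?thesis by (simp add: abs_sgn mult.left_commute)
  qed auto
  have "\<bar>c i\<bar> \<le> (\<Sum>j<n. if x ! j \<noteq> 0 then \<bar>c j\<bar> else 0)"
    using member_le_sum[of i "{..<n}" "\<lambda>j. if x ! j \<noteq> 0 then \<bar>c j\<bar> else 0"] i by simp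
  moreover have "c i \<noteq> 0" using sgn_s i by (metis of_int_eq_0_iff sgn_0)
  ultimately have "(\<Sum>j<n. if x ! j \<noteq> 0 then \<bar>c j\<bar> else 0) \<noteq> 0" by linarith
  with k show ?thesis by (auto simp: summand simp flip: sum_distrib_left)
qed

lemma sgn_vector_in_S:
  fixes c :: "nat \<Rightarrow> real"
  assumes "j0 < n" "c j0 \<noteq> 0"
  obtains s e where "s \<in> S n" "e = 1 \<or> e = -1"
    "\<forall>j<n. real_of_int (s ! j) = sgn (e * c j)"
proof -
  obtain f where f: "f < n" "c f \<noteq> 0" "\<forall>j<f. c j = 0"
    using exists_least_iff[of "\<lambda>f. f < n \<and> c f \<noteq> 0"] assms
    by (metis order.strict_trans)
  define e where "e = sgn (c f)"
  define s where "s = map (\<lambda>j. if e * c j > 0 then 1 else if e * c j < 0 then -1 else 0 :: int) [0..<n]"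
  have e: "e = 1 \<or> e = -1" using f(2) by (auto simp: e_def sgn_real_def)
  have s_nth: "real_of_int (s ! j) = sgn (e * c j)" if "j < n" for j
    using that by (simp add: s_def sgn_real_def)
  have "s \<in> S n"
    unfolding S_def
  proof (intro CollectI conjI)
    show "length s = n" by (simp add: s_def)
    show "set s \<subseteq> {-1, 0, 1}" by (auto simp: s_def sgn_real_def)
    show "\<exists>i<n. s ! i \<noteq> 0 \<and> s ! i = 1 \<and> (\<forall>j<i. s ! j = 0)"
      using f e by (intro exI[of _ f]) (auto simp: s_def e_def sgn_mult)
  qed
  with e s_nth that show ?thesis by blast
qed

lemma Elim_ne_S_if_column_dependency:
  fixes c :: "nat \<Rightarrow> real"
  assumes "j0 < n" "c j0 \<noteq> 0"
    and dep: "\<forall>x\<in>X. (\<Sum>j<n. c j * real_of_int (x ! j)) = 0"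
  shows "Elim n X \<noteq> S n"
proof -
  obtain s and e :: real where s: "s \<in> S n" and e: "e = 1 \<or> e = -1"
    and sgn_s: "\<forall>j<n. real_of_int (s ! j) = sgn (e * c j)"
    using sgn_vector_in_S[of j0 n c] assms by blast
  have "s \<notin> Elim n X"
  proof
    assume "s \<in> Elim n X"
    then obtain x where "x \<in> X" and elim: "eliminates (map V x) s" by (auto simp: Elim_def)
    have "length s = n" using s by (simp add: S_def)
    from sum_ne_zero_if_eliminates_sgn[OF elim this sgn_s]
    have "e * (\<Sum>j<n. c j * real_of_int (x ! j)) \<noteq> 0"
      by (simp add: sum_distrib_left mult.assoc)
    with dep \<open>x \<in> X\<close> show False by simp
  qed
  with s show ?thesis by blast
qed

lemma square_mat_right_kernel_if_left_kernel:
  fixes A :: "'a :: field mat"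
  assumes A: "A \<in> carrier_mat n n" and "v \<in> carrier_vec n" "v \<noteq> 0\<^sub>v n"
    and "transpose_mat A *\<^sub>v v = 0\<^sub>v n"
  obtains w where "w \<in> carrier_vec n" "w \<noteq> 0\<^sub>v n" "A *\<^sub>v w = 0\<^sub>v n"
proof -
  have "det (transpose_mat A) = 0"
    using assms det_0_iff_vec_prod_zero_field[of "transpose_mat A" n] by auto
  then have "det A = 0" by (simp add: det_transpose[OF A])
  with that show ?thesis using det_0_iff_vec_prod_zero_field[OF A] by blast
qed

lemma column_dependency_if_row_dependency:
  fixes M :: "'a \<Rightarrow> nat \<Rightarrow> real"
  assumes fin: "finite X" and card: "card X = n"
    and dep: "\<forall>j<n. (\<Sum>x\<in>X. a x * M x j) = 0" and "x0 \<in> X" "a x0 \<noteq> 0"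
  shows "\<exists>c. (\<exists>j<n. c j \<noteq> 0) \<and> (\<forall>x\<in>X. (\<Sum>j<n. c j * M x j) = 0)"
proof -
  obtain r where r: "bij_betw r {0..<n} X"
    using ex_bij_betw_nat_finite[OF fin] card by blast
  define A where "A = mat n n (\<lambda>(i, j). M (r i) j)"
  define v where "v = vec n (\<lambda>i. a (r i))"
  have A: "A \<in> carrier_mat n n" by (simp add: A_def)
  have "transpose_mat A *\<^sub>v v = 0\<^sub>v n"
  proof (rule eq_vecI)
    fix j assume "j < dim_vec (0\<^sub>v n :: real vec)"
    then have j: "j < n" by simp
    have "(transpose_mat A *\<^sub>v v) $ j = (\<Sum>i\<in>{0..<n}. a (r i) * M (r i) j)"
      using j by (simp add: A_def v_def scalar_prod_def mult.commute)
    also have "\<dots> = (\<Sum>x\<in>X. a x * M x j)"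
      using sum.reindex_bij_betw[OF r] .
    finally show "(transpose_mat A *\<^sub>v v) $ j = 0\<^sub>v n $ j" using dep j by simp
  qed (simp add: A_def)
  moreover have "v \<noteq> 0\<^sub>v n"
  proof
    assume "v = 0\<^sub>v n"
    obtain i where "i < n" "r i = x0"
      using r \<open>x0 \<in> X\<close> by (auto simp: bij_betw_def)
    with \<open>v = 0\<^sub>v n\<close> \<open>a x0 \<noteq> 0\<close> show False by (metis index_vec index_zero_vec(1) v_def)
  qed
  ultimately obtain w where w: "w \<in> carrier_vec n" "w \<noteq> 0\<^sub>v n" "A *\<^sub>v w = 0\<^sub>v n"
    using square_mat_right_kernel_if_left_kernel[OF A] by (metis v_def vec_carrier)
  have "\<exists>j<n. w $ j \<noteq> 0"
    using w(1,2) by (metis carrier_vecD eq_vecI index_zero_vec)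
  moreover have "(\<Sum>j<n. w $ j * M x j) = 0" if "x \<in> X" for x
  proof -
    obtain i where i: "i < n" "r i = x" using r \<open>x \<in> X\<close> by (auto simp: bij_betw_def)
    have "(A *\<^sub>v w) $ i = (\<Sum>j<n. w $ j * M x j)"
      using i w(1) by (simp add: A_def scalar_prod_def lessThan_atLeast0 mult.commute)
    with w(3) i show ?thesis by simp
  qed
  ultimately show ?thesis by blast
qed

lemma finite_S: "finite (S n)"
  by (rule finite_subset[of _ "{xs. set xs \<subseteq> {-1, 0, 1 :: int} \<and> length xs = n}"])
     (auto simp: S_def intro: finite_lists_length_eq)

theorem mainTheorem4:
  fixes n :: nat and X :: "int list set"
  assumes "X \<subseteq> S n"
  shows "((\<exists>c :: nat \<Rightarrow> real. (\<exists>j<n. c j \<noteq> 0) \<and>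
             (\<forall>x\<in>X. (\<Sum>j<n. c j * real_of_int (x ! j)) = 0))
          \<longrightarrow> Elim n X \<noteq> S n)
       \<and> ((Elim n X = S n \<and> card X = n)
          \<longrightarrow> (\<forall>a :: int list \<Rightarrow> real.
                (\<forall>j<n. (\<Sum>x\<in>X. a x * real_of_int (x ! j)) = 0) \<longrightarrow> (\<forall>x\<in>X. a x = 0)))"
proof (intro conjI impI allI ballI)
  show "Elim n X \<noteq> S n" if "\<exists>c :: nat \<Rightarrow> real. (\<exists>j<n. c j \<noteq> 0) \<and>
             (\<forall>x\<in>X. (\<Sum>j<n. c j * real_of_int (x ! j)) = 0)"
    using that Elim_ne_S_if_column_dependency by blast
next
  fix a :: "int list \<Rightarrow> real" and x0
  assume covers: "Elim n X = S n \<and> card X = n"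
    and dep: "\<forall>j<n. (\<Sum>x\<in>X. a x * real_of_int (x ! j)) = 0" and "x0 \<in> X"
  have "finite X" using assms finite_S finite_subset by blast
  show "a x0 = 0"
  proof (rule ccontr)
    assume "a x0 \<noteq> 0"
    then obtain c :: "nat \<Rightarrow> real" where "\<exists>j<n. c j \<noteq> 0"
      "\<forall>x\<in>X. (\<Sum>j<n. c j * real_of_int (x ! j)) = 0"
      using column_dependency_if_row_dependency[OF \<open>finite X\<close> _ dep \<open>x0 \<in> X\<close>] covers by blast
    with covers show False using Elim_ne_S_if_column_dependency by blast
  qed
qed

end
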